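(* Let $n\ge4$ and let $\lambda=(a_1,\dots,a_n)$ (usual coordinates) be a dominant weight of $SL(n)$ all of whose coordinates $a_i$ are non-integers. If the collection $a_1,\dots,a_n$ takes at least three distinct values, then $M(\lambda)$ contains a point three of whose coordinates are equal to $\alpha+1,\alpha,\alpha-1$ for some $\alpha\in\mathbb R$.
   Context: Setup for $SL(n)$: $\varepsilon_1,\dots,\varepsilon_n$ is the standard basis of $\mathbb Q^n$, $e_i=\varepsilon_i-\frac1n(1,\dots,1)$; the character lattice $\mathfrak X(T)$ of the diagonal torus is identified with the $\mathbb Z$-span of $e_1,\dots,e_n$ inside $\{y\in\mathbb Q^n:\sum y_i=0\}$ (the $y_i$ are the "usual coordinates"). $W=S_n$ acts by permuting coordinates. A weight is dominant if $y_1\ge y_2\ge\dots\ge y_n$. The root lattice is $\Phi=\{\sum a_ie_i\mid a_i\in\mathbb Z,\ \sum a_i\equiv0\pmod n\}$. For a dominant weight $\lambda$, $M(\lambda)=\mathrm{conv}\{w\lambda\mid w\in W\}\cap(\lambda+\Phi)$. *)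

theory Defs
  imports "HOL-Combinatorics.Permutations" Complex_Main
begin

text \<open>Vectors in Q^n (embedded in R^n) are represented as functions nat => real;
  only the coordinates i < n are meaningful, the others are 0.\<close>

definition basis_e :: "nat \<Rightarrow> nat \<Rightarrow> nat \<Rightarrow> real" where
  "basis_e n i = (\<lambda>j. if j < n then (if j = i then 1 else 0) - 1 / real n else 0)"

definition char_lattice :: "nat \<Rightarrow> (nat \<Rightarrow> real) set" where
  "char_lattice n = {y. \<exists>c :: nat \<Rightarrow> int. y = (\<lambda>j. \<Sum>i<n. of_int (c i) * basis_e n i j)}"

definition root_lattice :: "nat \<Rightarrow> (nat \<Rightarrow> real) set" where
  "root_lattice n = {y. \<exists>c :: nat \<Rightarrow> int. (\<Sum>i<n. c i) mod int n = 0 \<and>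
                        y = (\<lambda>j. \<Sum>i<n. of_int (c i) * basis_e n i j)}"

definition dominant :: "nat \<Rightarrow> (nat \<Rightarrow> real) \<Rightarrow> bool" where
  "dominant n y \<longleftrightarrow> (\<forall>i j. i \<le> j \<and> j < n \<longrightarrow> y j \<le> y i)"

definition weyl_orbit :: "nat \<Rightarrow> (nat \<Rightarrow> real) \<Rightarrow> (nat \<Rightarrow> real) set" where
  "weyl_orbit n y = {(\<lambda>i. y (inv w i)) | w. w permutes {..<n}}"

definition conv_fin :: "(nat \<Rightarrow> real) set \<Rightarrow> (nat \<Rightarrow> real) set" where
  "conv_fin S = {x. \<exists>t :: (nat \<Rightarrow> real) \<Rightarrow> real. (\<forall>p\<in>S. 0 \<le> t p) \<and> sum t S = 1 \<and>
                     x = (\<lambda>i. \<Sum>p\<in>S. t p * p i)}"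

definition M_set :: "nat \<Rightarrow> (nat \<Rightarrow> real) \<Rightarrow> (nat \<Rightarrow> real) set" where
  "M_set n lam = conv_fin (weyl_orbit n lam) \<inter> {(\<lambda>i. lam i + p i) | p. p \<in> root_lattice n}"

end

theory Submission
  imports Defs
begin

(* All coordinates of a weight lam in the character lattice differ by
   integers, and M(lam) consists exactly of the points x of the convex hull of the
   Weyl orbit W lam for which every x_k - lam_k is an integer.  The hull is closed
   under the "balancing move" that replaces two coordinates (u, v), u >= v, by
   (s, u + v - s) for any s in [v, u]: this is a convex combination of x and x with
   the two coordinates swapped.  If s - u is an integer the move stays inside M(lam).

   The
   combinatorial core then shows: if four coordinates of a point of M(lam) carry the
   values L+A >= L+B >= L+C >= L+D (A, B, C, D integers) with B or C strictly
   between A and D, then at most two balancing moves produce three coordinates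
   alpha+1, alpha, alpha-1.  For a dominant lam with at least three distinct values
   and n >= 4, the coordinates 0 < q < r < n-1 provide such a configuration. *)

lemma conv_fin_point:
  assumes "finite S" "p \<in> S"
  shows "p \<in> conv_fin S"
proof -
  define t where "t = (\<lambda>q::nat\<Rightarrow>real. if q = p then (1::real) else 0)"
  have "\<forall>q\<in>S. 0 \<le> t q" unfolding t_def by simp
  moreover have "sum t S = 1" unfolding t_def using assms by simp
  moreover have "p i = (\<Sum>q\<in>S. t q * q i)" for i
  proof -
    have "(\<Sum>q\<in>S. t q * q i) = (\<Sum>q\<in>S. if q = p then p i else 0)"
      by (rule sum.cong) (auto simp: t_def)
    also have "\<dots> = p i" using assms by simp
    finally show ?thesis by simp
  qed
  ultimately show ?thesis unfolding conv_fin_def by blast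
qed

lemma conv_fin_comb:
  assumes "x \<in> conv_fin S" "y \<in> conv_fin S" "0 \<le> u" "u \<le> 1"
  shows "(\<lambda>k. u * x k + (1 - u) * y k) \<in> conv_fin S"
proof -
  obtain t1 where t1: "\<forall>p\<in>S. 0 \<le> t1 p" "sum t1 S = 1" "x = (\<lambda>i. \<Sum>p\<in>S. t1 p * p i)"
    using assms(1) unfolding conv_fin_def by auto
  obtain t2 where t2: "\<forall>p\<in>S. 0 \<le> t2 p" "sum t2 S = 1" "y = (\<lambda>i. \<Sum>p\<in>S. t2 p * p i)"
    using assms(2) unfolding conv_fin_def by auto
  define t where "t = (\<lambda>p. u * t1 p + (1 - u) * t2 p)"
  have "\<forall>p\<in>S. 0 \<le> t p" using t1 t2 assms(3,4) unfolding t_def by auto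
  moreover have "sum t S = 1" unfolding t_def
    by (simp add: sum.distrib sum_distrib_left[symmetric] t1 t2)
  moreover have "(\<lambda>k. u * x k + (1 - u) * y k) = (\<lambda>i. \<Sum>p\<in>S. t p * p i)"
  proof
    fix i
    have "(\<Sum>p\<in>S. t p * p i) = (\<Sum>p\<in>S. u * (t1 p * p i) + (1 - u) * (t2 p * p i))"
      by (rule sum.cong) (auto simp: t_def algebra_simps)
    also have "\<dots> = u * x i + (1 - u) * y i"
      by (simp add: sum.distrib sum_distrib_left[symmetric] t1(3) t2(3))
    finally show "u * x i + (1 - u) * y i = (\<Sum>p\<in>S. t p * p i)" by simp
  qed
  ultimately show ?thesis unfolding conv_fin_def by blast
qed

lemma conv_fin_involution:
  assumes "x \<in> conv_fin S" "\<And>k. \<sigma> (\<sigma> k) = k" "\<And>p. p \<in> S \<Longrightarrow> p \<circ> \<sigma> \<in> S"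
  shows "x \<circ> \<sigma> \<in> conv_fin S"
proof -
  let ?f = "\<lambda>p::nat\<Rightarrow>real. p \<circ> \<sigma>"
  obtain t where t: "\<forall>p\<in>S. 0 \<le> t p" "sum t S = 1" "x = (\<lambda>i. \<Sum>p\<in>S. t p * p i)"
    using assms(1) unfolding conv_fin_def by auto
  have twice: "?f (?f p) = p" for p by (auto simp: assms(2))
  have reindex: "sum (g \<circ> ?f) S = sum g S" for g :: "(nat \<Rightarrow> real) \<Rightarrow> real"
    by (rule sum.reindex_bij_witness[where i="?f" and j="?f"]) (use twice assms(3) in auto)
  have "\<forall>p\<in>S. 0 \<le> (t \<circ> ?f) p" using t(1) assms(3) by auto
  moreover have "sum (t \<circ> ?f) S = 1" using reindex[of t] t(2) by simp
  moreover have "x \<circ> \<sigma> = (\<lambda>k. \<Sum>p\<in>S. (t \<circ> ?f) p * p k)"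
  proof
    fix k
    have "(\<Sum>p\<in>S. (t \<circ> ?f) p * p k) = (\<Sum>p\<in>S. t p * ?f p k)"
      using reindex[of "\<lambda>p. t p * ?f p k"] by (simp add: o_def assms(2))
    thus "(x \<circ> \<sigma>) k = (\<Sum>p\<in>S. (t \<circ> ?f) p * p k)" by (simp add: t(3))
  qed
  ultimately show ?thesis unfolding conv_fin_def by blast
qed

lemma weyl_orbit_finite: "finite (weyl_orbit n lam)"
proof -
  have "weyl_orbit n lam = (\<lambda>w. \<lambda>i. lam (inv w i)) ` {w. w permutes {..<n}}"
    unfolding weyl_orbit_def by auto
  thus ?thesis using finite_permutations[of "{..<n}"] by simp
qed

lemma weyl_orbit_self: "lam \<in> weyl_orbit n lam"
  unfolding weyl_orbit_def by (rule CollectI, rule exI[of _ id]) (auto simp: permutes_id)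

lemma weyl_orbit_transpose:
  assumes "p \<in> weyl_orbit n lam" "i < n" "j < n"
  shows "p \<circ> Transposition.transpose i j \<in> weyl_orbit n lam"
proof -
  obtain w where w: "w permutes {..<n}" "p = (\<lambda>i. lam (inv w i))"
    using assms(1) unfolding weyl_orbit_def by auto
  let ?s = "Transposition.transpose i j"
  have sp: "?s permutes {..<n}" using assms by (simp add: permutes_swap_id)
  have "inv (?s \<circ> w) = inv w \<circ> inv ?s"
    by (rule o_inv_distrib) (use w sp in \<open>auto intro: permutes_bij\<close>)
  hence "p \<circ> ?s = (\<lambda>k. lam (inv (?s \<circ> w) k))" using w by auto
  moreover have "?s \<circ> w permutes {..<n}" using w sp by (simp add: permutes_compose)
  ultimately show ?thesis unfolding weyl_orbit_def by blast
qed

text \<open>Points of the hull agree with lam outside the first n coordinates and have the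
  same coordinate sum; this is what places them in the affine span lam + root space.\<close>
lemma weyl_hull_coords:
  assumes "x \<in> conv_fin (weyl_orbit n lam)"
  shows "\<And>k. n \<le> k \<Longrightarrow> x k = lam k" and "(\<Sum>k<n. x k) = (\<Sum>k<n. lam k)"
proof -
  let ?O = "weyl_orbit n lam"
  obtain t where t: "\<forall>p\<in>?O. 0 \<le> t p" "sum t ?O = 1" "x = (\<lambda>i. \<Sum>p\<in>?O. t p * p i)"
    using assms(1) unfolding conv_fin_def by auto
  have orbit: "(\<forall>k. n \<le> k \<longrightarrow> p k = lam k) \<and> (\<Sum>k<n. p k) = (\<Sum>k<n. lam k)"
    if p: "p \<in> ?O" for p
  proof -
    obtain w where w: "w permutes {..<n}" "p = (\<lambda>i. lam (inv w i))"
      using p unfolding weyl_orbit_def by auto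
    have iw: "inv w permutes {..<n}" using w(1) by (rule permutes_inv)
    have "\<forall>k. n \<le> k \<longrightarrow> p k = lam k" using w(2) permutes_not_in[OF iw] by auto
    moreover have "(\<Sum>k<n. lam k) = (\<Sum>k<n. (lam \<circ> inv w) k)"
      using sum.permute[OF iw] by blast
    ultimately show ?thesis using w(2) by (simp add: o_def)
  qed
  show "x k = lam k" if "n \<le> k" for k
  proof -
    have "x k = (\<Sum>p\<in>?O. t p * lam k)" unfolding t(3) by (rule sum.cong) (use orbit that in auto)
    also have "\<dots> = lam k" using t(2) by (simp add: sum_distrib_right[symmetric])
    finally show ?thesis .
  qed
  have "(\<Sum>k<n. x k) = (\<Sum>p\<in>?O. t p * (\<Sum>k<n. p k))"
    unfolding t(3) by (simp add: sum.swap[of _ "{..<n}"] sum_distrib_left)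
  also have "\<dots> = (\<Sum>p\<in>?O. t p * (\<Sum>k<n. lam k))" by (rule sum.cong) (use orbit in auto)
  also have "\<dots> = (\<Sum>k<n. lam k)" using t(2) by (simp add: sum_distrib_right[symmetric])
  finally show "(\<Sum>k<n. x k) = (\<Sum>k<n. lam k)" .
qed

lemma weyl_hull_balance:
  assumes "x \<in> conv_fin (weyl_orbit n lam)" "i < n" "j < n" "i \<noteq> j"
    and "x j \<le> s" "s \<le> x i"
  shows "x(i := s, j := x i + x j - s) \<in> conv_fin (weyl_orbit n lam)"
proof (cases "x i = x j")
  case True
  hence "x(i := s, j := x i + x j - s) = x" using assms(5,6) by auto
  thus ?thesis using assms(1) by simp
next
  case False
  define u where "u = (s - x j) / (x i - x j)"
  have gap: "x i - x j > 0" using False assms(5,6) by simp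
  have u01: "0 \<le> u" "u \<le> 1" using assms(5,6) gap unfolding u_def by (auto simp: divide_simps)
  have us: "u * (x i - x j) = s - x j" unfolding u_def using gap by simp
  let ?s = "Transposition.transpose i j"
  have swapped: "x \<circ> ?s \<in> conv_fin (weyl_orbit n lam)"
    by (rule conv_fin_involution[OF assms(1)]) (use weyl_orbit_transpose assms(2,3) in auto)
  have eq: "(\<lambda>k. u * x k + (1 - u) * (x \<circ> ?s) k) = x(i := s, j := x i + x j - s)"
  proof
    fix k
    show "u * x k + (1 - u) * (x \<circ> ?s) k = (x(i := s, j := x i + x j - s)) k"
      using us assms(4) by (cases "k = i \<or> k = j") (auto simp: algebra_simps)
  qed
  show ?thesis using conv_fin_comb[OF assms(1) swapped u01] unfolding eq .
qed

lemma lattice_coord: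
  assumes "j < n"
  shows "(\<Sum>i<n. of_int (c i) * basis_e n i j) = of_int (c j) - (\<Sum>i<n. of_int (c i)) / real n"
proof -
  have "(\<Sum>i<n. of_int (c i) * basis_e n i j) =
        (\<Sum>i<n. (if i = j then of_int (c i) else 0) - of_int (c i) / real n)"
    unfolding basis_e_def by (rule sum.cong) (use assms in \<open>auto simp: algebra_simps\<close>)
  also have "\<dots> = of_int (c j) - (\<Sum>i<n. of_int (c i)) / real n"
    using assms by (simp add: sum_subtractf sum_divide_distrib)
  finally show ?thesis .
qed

lemma char_lattice_int_diff:
  assumes "lam \<in> char_lattice n" "i < n" "j < n"
  shows "lam i - lam j \<in> \<int>"
proof -
  obtain c where c: "lam = (\<lambda>j. \<Sum>i<n. of_int (c i) * basis_e n i j)"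
    using assms(1) unfolding char_lattice_def by auto
  have "lam i - lam j = of_int (c i - c j)"
    unfolding c using lattice_coord[OF assms(2)] lattice_coord[OF assms(3)] by simp
  thus ?thesis by simp
qed

lemma M_set_iff:
  "x \<in> M_set n lam \<longleftrightarrow> x \<in> conv_fin (weyl_orbit n lam) \<and> (\<forall>k<n. x k - lam k \<in> \<int>)"
proof
  assume "x \<in> M_set n lam"
  then obtain p c where x: "x \<in> conv_fin (weyl_orbit n lam)" "x = (\<lambda>i. lam i + p i)"
    and c: "(\<Sum>i<n. c i) mod int n = 0" "p = (\<lambda>j. \<Sum>i<n. of_int (c i) * basis_e n i j)"
    unfolding M_set_def root_lattice_def by auto
  obtain m where m: "(\<Sum>i<n. c i) = int n * m" using c(1) by (auto elim: dvdE)
  have "x k - lam k \<in> \<int>" if k: "k < n" for k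
  proof -
    have "real_of_int (\<Sum>i<n. c i) / real n = of_int m" using m k by simp
    hence "x k - lam k = of_int (c k - m)" using x(2) c(2) lattice_coord[OF k, of c] by simp
    thus ?thesis by simp
  qed
  thus "x \<in> conv_fin (weyl_orbit n lam) \<and> (\<forall>k<n. x k - lam k \<in> \<int>)" using x(1) by blast
next
  assume hyp: "x \<in> conv_fin (weyl_orbit n lam) \<and> (\<forall>k<n. x k - lam k \<in> \<int>)"
  hence x: "x \<in> conv_fin (weyl_orbit n lam)" by blast
  define p where "p = (\<lambda>k. x k - lam k)"
  define c where "c = (\<lambda>k. \<lfloor>p k\<rfloor>)"
  have pc: "of_int (c k) = p k" if "k < n" for k
    using hyp that unfolding c_def p_def by (metis Ints_cases floor_of_int)
  have "(\<Sum>k<n. p k) = 0"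
    unfolding p_def using weyl_hull_coords(2)[OF x] by (simp add: sum_subtractf)
  hence real_sum: "(\<Sum>i<n. real_of_int (c i)) = 0" using pc by simp
  hence "real_of_int (\<Sum>i<n. c i) = 0" by simp
  hence sums: "(\<Sum>i<n. real_of_int (c i)) = 0" "(\<Sum>i<n. c i) = 0"
    using real_sum by (simp_all only: of_int_eq_0_iff)
  have "p = (\<lambda>j. \<Sum>i<n. of_int (c i) * basis_e n i j)"
  proof
    fix j
    show "p j = (\<Sum>i<n. of_int (c i) * basis_e n i j)"
    proof (cases "j < n")
      case True
      thus ?thesis using lattice_coord[OF True, of c] sums pc by simp
    next
      case False
      thus ?thesis using weyl_hull_coords(1)[OF x] unfolding p_def basis_e_def by simp
    qed
  qed
  hence "p \<in> root_lattice n" unfolding root_lattice_def using sums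
    by (intro CollectI exI[of _ c]) simp
  moreover have "x = (\<lambda>i. lam i + p i)" unfolding p_def by simp
  ultimately show "x \<in> M_set n lam" unfolding M_set_def using x by blast
qed

lemma M_set_self: "lam \<in> M_set n lam"
  using M_set_iff conv_fin_point[OF weyl_orbit_finite weyl_orbit_self] by simp

text \<open>Balancing moves by integral amounts keep us inside M(lam).  Coordinates are
  written as L + integer, the form in which the combinatorial argument works.\<close>
lemma M_set_balance:
  fixes a b s :: int
  assumes "x \<in> M_set n lam" "i < n" "j < n" "i \<noteq> j"
    and "x i = L + of_int a" "x j = L + of_int b" "b \<le> s" "s \<le> a"
  shows "x(i := L + of_int s, j := L + of_int (a + b - s)) \<in> M_set n lam"
proof -
  let ?y = "x(i := L + of_int s, j := x i + x j - (L + of_int s))"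
  have hull: "x \<in> conv_fin (weyl_orbit n lam)" and int: "\<forall>k<n. x k - lam k \<in> \<int>"
    using assms(1) M_set_iff by blast+
  have "?y \<in> conv_fin (weyl_orbit n lam)"
    by (rule weyl_hull_balance[OF hull assms(2-4)]) (use assms(5-8) in simp_all)
  moreover have "?y k - lam k \<in> \<int>" if "k < n" for k
  proof -
    have "?y k - lam k = x k - lam k + of_int (if k = j then a - s else if k = i then s - a else 0)"
      using assms(4-6) by auto
    thus ?thesis using int that by (metis Ints_add Ints_of_int)
  qed
  moreover have "?y = x(i := L + of_int s, j := L + of_int (a + b - s))"
    using assms(5,6) by (simp add: algebra_simps)
  ultimately show ?thesis using M_set_iff by metis
qed

definition unit_triple :: "nat \<Rightarrow> (nat \<Rightarrow> real) \<Rightarrow> bool" where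
  "unit_triple n x \<longleftrightarrow> (\<exists>\<alpha>::real. \<exists>i j k.
     i < n \<and> j < n \<and> k < n \<and> i \<noteq> j \<and> j \<noteq> k \<and> i \<noteq> k \<and>
     x i = \<alpha> + 1 \<and> x j = \<alpha> \<and> x k = \<alpha> - 1)"

lemma unit_tripleI:
  fixes m :: int
  assumes "i < n" "j < n" "k < n" "i \<noteq> j" "j \<noteq> k" "i \<noteq> k"
    and "x i = L + of_int (m + 1)" "x j = L + of_int m" "x k = L + of_int (m - 1)"
  shows "unit_triple n x"
  unfolding unit_triple_def using assms
  by (intro exI[of _ "L + of_int m"] exI[of _ i] exI[of _ j] exI[of _ k]) simp

text \<open>Core, first case: the two middle values coincide, A > B = C > D.
  Move (i0, i1) to (B+1, A-1), then (i1, i3) to (A+D-B, B-1).\<close>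
lemma triple_equal_middle:
  fixes A B D :: int
  assumes "x \<in> M_set n lam" and idx: "i0 < n" "i1 < n" "i2 < n" "i3 < n"
    and dist: "distinct [i0, i1, i2, i3]"
    and vals: "x i0 = L + of_int A" "x i1 = L + of_int B" "x i2 = L + of_int B" "x i3 = L + of_int D"
    and ord: "D < B" "B < A"
  shows "\<exists>y\<in>M_set n lam. unit_triple n y"
proof -
  define x1 where "x1 = x(i0 := L + of_int (B + 1), i1 := L + of_int (A + B - (B + 1)))"
  have x1: "x1 \<in> M_set n lam"
    unfolding x1_def by (rule M_set_balance[OF assms(1) idx(1,2)]) (use dist vals ord in auto)
  have x1v: "x1 i1 = L + of_int (A - 1)" "x1 i3 = L + of_int D"
    using dist vals unfolding x1_def by auto
  define x2 where "x2 = x1(i1 := L + of_int (A + D - B), i3 := L + of_int (A - 1 + D - (A + D - B)))"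
  have "x2 \<in> M_set n lam"
    unfolding x2_def by (rule M_set_balance[OF x1 idx(2,4) _ x1v]) (use dist ord in auto)
  moreover have "unit_triple n x2"
    by (rule unit_tripleI[OF idx(1,3,4), where L=L and m=B]) (use dist vals in \<open>auto simp: x1_def x2_def\<close>)
  ultimately show ?thesis by blast
qed

text \<open>Core, second case: B > C.  With m = C + floor((B-C)/2), first move (i1, i2) to
  (m+1, B+C-m-1); the outer pair (i0, i3) then supplies the missing third value.\<close>
lemma triple_distinct_middle:
  fixes A B C D :: int
  assumes "x \<in> M_set n lam" and idx: "i0 < n" "i1 < n" "i2 < n" "i3 < n"
    and dist: "distinct [i0, i1, i2, i3]"
    and vals: "x i0 = L + of_int A" "x i1 = L + of_int B" "x i2 = L + of_int C" "x i3 = L + of_int D"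
    and ord: "C < B" "B \<le> A" "D \<le> C" "(B < A \<and> D < B) \<or> (C < A \<and> D < C)"
  shows "\<exists>y\<in>M_set n lam. unit_triple n y"
proof -
  define m where "m = C + (B - C) div 2"
  define x1 where "x1 = x(i1 := L + of_int (m + 1), i2 := L + of_int (B + C - (m + 1)))"
  have x1: "x1 \<in> M_set n lam"
    unfolding x1_def by (rule M_set_balance[OF assms(1) idx(2,3)]) (use dist vals ord in \<open>auto simp: m_def\<close>)
  have x1v: "x1 i0 = L + of_int A" "x1 i3 = L + of_int D" "x1 i1 = L + of_int (m + 1)"
    "x1 i2 = L + of_int (B + C - (m + 1))"
    using dist vals unfolding x1_def by auto
  have outer: "x1(i0 := L + of_int s, i3 := L + of_int (A + D - s)) \<in> M_set n lam"
    if "D \<le> s" "s \<le> A" for s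
    by (rule M_set_balance[OF x1 idx(1,4) _ x1v(1,2) that]) (use dist in auto)
  have parity: "B + C = 2 * m \<or> B + C = 2 * m + 1" unfolding m_def by presburger
  consider (even) "B + C = 2 * m" | (odd_low) "B + C = 2 * m + 1" "m + 2 \<le> A"
    | (odd_high) "B + C = 2 * m + 1" "A < m + 2"
    using parity by (cases "m + 2 \<le> A") auto
  thus ?thesis
  proof cases
    case even \<comment> \<open>(i1, i2) now hold m+1, m-1; put m into i0\<close>
    let ?y = "x1(i0 := L + of_int m, i3 := L + of_int (A + D - m))"
    have "unit_triple n ?y"
      by (rule unit_tripleI[OF idx(2,1,3), where L=L and m=m]) (use dist x1v even in auto)
    moreover have "?y \<in> M_set n lam" by (rule outer) (use ord even in \<open>auto simp: m_def\<close>)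
    ultimately show ?thesis by blast
  next
    case odd_low \<comment> \<open>(i1, i2) now hold m+1, m; put m+2 into i0\<close>
    let ?y = "x1(i0 := L + of_int (m + 2), i3 := L + of_int (A + D - (m + 2)))"
    have "unit_triple n ?y"
      by (rule unit_tripleI[OF idx(1,2,3), where L=L and m="m + 1"]) (use dist x1v odd_low in auto)
    moreover have "?y \<in> M_set n lam" by (rule outer) (use ord odd_low in \<open>auto simp: m_def\<close>)
    ultimately show ?thesis by blast
  next
    case odd_high \<comment> \<open>here A = B = C+1, so D < C and i3 can take m-1\<close>
    let ?y = "x1(i0 := L + of_int (A + D - (m - 1)), i3 := L + of_int (A + D - (A + D - (m - 1))))"
    have "unit_triple n ?y"
      by (rule unit_tripleI[OF idx(2,3,4), where L=L and m=m]) (use dist x1v odd_high in auto)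
    moreover have "?y \<in> M_set n lam" by (rule outer) (use ord odd_high in \<open>auto simp: m_def\<close>)
    ultimately show ?thesis by blast
  qed
qed

lemma dominant_inner_pair:
  assumes "n \<ge> 4" "dominant n lam" "card (lam ` {..<n}) \<ge> 3"
  obtains q r where "0 < q" "q < r" "r < n - 1"
    "(lam q < lam 0 \<and> lam (n - 1) < lam q) \<or> (lam r < lam 0 \<and> lam (n - 1) < lam r)"
proof -
  define N where "N = n - 1"
  have dom: "\<And>i j. i \<le> j \<Longrightarrow> j < n \<Longrightarrow> lam j \<le> lam i"
    using assms(2) unfolding dominant_def by blast
  obtain j where j: "j < n" "lam j \<noteq> lam 0" "lam j \<noteq> lam N"
  proof -
    have "\<not> lam ` {..<n} \<subseteq> {lam 0, lam N}"
    proof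
      assume "lam ` {..<n} \<subseteq> {lam 0, lam N}"
      hence "card (lam ` {..<n}) \<le> card {lam 0, lam N}" by (intro card_mono) auto
      also have "\<dots> \<le> 2" by (simp add: card_insert_if)
      finally show False using assms(3) by simp
    qed
    thus ?thesis using that by blast
  qed
  have jpos: "0 < j" using j by (cases j) auto
  have "j \<noteq> N" using j(3) by blast
  hence jN: "j < N" using j(1) unfolding N_def by linarith
  have "lam j \<le> lam 0" "lam N \<le> lam j" using dom[of 0 j] dom[of j N] j(1) jN unfolding N_def by simp_all
  hence strict: "lam j < lam 0 \<and> lam N < lam j" using j(2,3) by simp
  show ?thesis
  proof (cases "j + 1 < N")
    case True
    thus ?thesis using that[of j "j + 1"] jpos strict unfolding N_def by auto
  next
    case False
    hence "j = N - 1" "1 < j" using jN assms(1) unfolding N_def by auto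
    thus ?thesis using that[of "j - 1" j] jN strict unfolding N_def by auto
  qed
qed

theorem lemma9:
  fixes n :: nat and lam :: "nat \<Rightarrow> real"
  assumes "n \<ge> 4"
    and "lam \<in> char_lattice n"
    and "dominant n lam"
    and "\<forall>i<n. lam i \<notin> \<int>"
    and "card (lam ` {..<n}) \<ge> 3"
  shows "\<exists>x\<in>M_set n lam. \<exists>\<alpha>::real. \<exists>i j k.
           i < n \<and> j < n \<and> k < n \<and> i \<noteq> j \<and> j \<noteq> k \<and> i \<noteq> k \<and>
           x i = \<alpha> + 1 \<and> x j = \<alpha> \<and> x k = \<alpha> - 1"
proof -
  obtain q r where qr: "0 < q" "q < r" "r < n - 1"
    "(lam q < lam 0 \<and> lam (n - 1) < lam q) \<or> (lam r < lam 0 \<and> lam (n - 1) < lam r)"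
    using dominant_inner_pair[OF assms(1,3,5)] by blast
  have idx: "0 < n" "q < n" "r < n" "n - 1 < n" and dist: "distinct [0, q, r, n - 1]"
    using qr assms(1) by auto
  have offset: "\<exists>z::int. lam k = lam 0 + of_int z" if k: "k < n" for k
  proof -
    obtain z where "lam k - lam 0 = of_int z"
      using char_lattice_int_diff[OF assms(2) k idx(1)] by (elim Ints_cases)
    thus ?thesis by (intro exI[of _ z]) simp
  qed
  obtain B C D :: int where vals: "lam q = lam 0 + of_int B" "lam r = lam 0 + of_int C"
    "lam (n - 1) = lam 0 + of_int D"
    using offset[OF idx(2)] offset[OF idx(3)] offset[OF idx(4)] by blast
  have self: "lam 0 = lam 0 + of_int 0" by simp
  have "lam r \<le> lam q" "lam q \<le> lam 0" "lam (n - 1) \<le> lam r"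
    using assms(3) qr idx unfolding dominant_def by simp_all
  hence ord: "C \<le> B" "B \<le> 0" "D \<le> C" "(B < 0 \<and> D < B) \<or> (C < 0 \<and> D < C)"
    using qr(4) unfolding vals by simp_all
  have "\<exists>y\<in>M_set n lam. unit_triple n y"
  proof (cases "B = C")
    case True
    show ?thesis by (rule triple_equal_middle[OF M_set_self idx dist self vals(1)])
      (use vals ord True in auto)
  next
    case False
    show ?thesis by (rule triple_distinct_middle[OF M_set_self idx dist self vals]) (use ord False in auto)
  qed
  thus ?thesis unfolding unit_triple_def .
qed

end
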